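(* Let $X$ be a finite set of nodes of the triangular grid with $G_X$ connected and without holes. Let $P$ be an $x$-portal dividing $X$ into sides $A$ and $B$, let $S\subseteq A\cup P$ be non-empty, and let $u\in B'=B\cap\mathrm{vis}(P)$ with $\Delta_u\subseteq X$. Then $n_z(u)$ is a feasible parent of $u$ if $\mathrm{dist}(S,\pi_z(u))\le\mathrm{dist}(S,\pi_y(u))$, and $n_y(u)$ is a feasible parent of $u$ if $\mathrm{dist}(S,\pi_z(u))\ge\mathrm{dist}(S,\pi_y(u))$.
   Context: $G_\Delta=(V_\Delta,E_\Delta)$ is the infinite regular triangular grid graph, with edges parallel to three axes: $x$ (west–east), $y$, $z$. $G_X$ is the subgraph induced by $X$; $X$ has no holes if the subgraph induced by $V_\Delta\setminus X$ is connected. $\mathrm{dist}$ is the distance in $G_X$ and $\mathrm{dist}(S,v)=\min_{s\in S}\mathrm{dist}(s,v)$. For an axis $d$, the $d$-portals are the vertex sets of the connected components of $(X,E_d)$, $E_d$ being the edges of $G_X$ parallel to $d$; $\mathrm{portal}_d(u)$ is the $d$-portal containing $u$. For the $x$-portal $P$ (a horizontal segment), $A$ is the union of the components of the subgraph induced by $X\setminus P$ that contain a node adjacent to $P$ on one side (half-plane) of the line through $P$, and $B=X\setminus(P\cup A)$. An amoebot $v$ is visible by $w$ if $v\in\mathrm{portal}_x(w)\cup\mathrm{portal}_y(w)\cup\mathrm{portal}_z(w)$; $\mathrm{vis}(P)=\bigcup_{w\in P}(\mathrm{portal}_x(w)\cup\mathrm{portal}_y(w)\cup\mathrm{portal}_z(w))$.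 For $u\in B'$, $\pi_y(u),\pi_z(u)\in V_\Delta$ are the projections of $u$ along the $y$- and $z$-axis onto the line through $P$; $\Delta_u$ is the set of nodes of $V_\Delta$ in the (closed) triangle with corners $u,\pi_y(u),\pi_z(u)$; $n_y(u),n_z(u)\in V_\Delta$ are the neighbors of $u$ in the direction of $\pi_y(u)$ and $\pi_z(u)$, respectively. A neighbor $v\in X$ of $u$ is a feasible parent of $u$ (with respect to $S$) if $\mathrm{dist}(S,u)=\mathrm{dist}(S,v)+1$. *)

theory Defs
  imports Main
begin

text \<open>Nodes of the triangular grid in axial coordinates: (a,b) is the point
 a*e_x + b*e_y with e_x = (1,0) (west-east) and e_y = (1/2, sqrt 3/2).\<close>

type_synonym node = "int \<times> int"

datatype axis = AxX | AxY | AxZ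

fun dvec :: "axis \<Rightarrow> node" where
  "dvec AxX = (1, 0)"
| "dvec AxY = (0, 1)"
| "dvec AxZ = (-1, 1)"

definition nplus :: "node \<Rightarrow> node \<Rightarrow> node" where
  "nplus u w = (fst u + fst w, snd u + snd w)"

definition adj_ax :: "axis \<Rightarrow> node \<Rightarrow> node \<Rightarrow> bool" where
  "adj_ax d u v \<longleftrightarrow> v = nplus u (dvec d) \<or> u = nplus v (dvec d)"

definition grid_adj :: "node \<Rightarrow> node \<Rightarrow> bool" where
  "grid_adj u v \<longleftrightarrow> (\<exists>d. adj_ax d u v)"

definition adj_in :: "node set \<Rightarrow> node \<Rightarrow> node \<Rightarrow> bool" where
  "adj_in Y u v \<longleftrightarrow> u \<in> Y \<and> v \<in> Y \<and> grid_adj u v"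

definition connected_set :: "node set \<Rightarrow> bool" where
  "connected_set Y \<longleftrightarrow> (\<forall>p\<in>Y. \<forall>q\<in>Y. (adj_in Y)\<^sup>*\<^sup>* p q)"

definition no_holes :: "node set \<Rightarrow> bool" where
  "no_holes X \<longleftrightarrow> connected_set (- X)"

definition gdist :: "node set \<Rightarrow> node \<Rightarrow> node \<Rightarrow> nat" where
  "gdist X u v = (LEAST n. ((adj_in X) ^^ n) u v)"

definition gdist_set :: "node set \<Rightarrow> node set \<Rightarrow> node \<Rightarrow> nat" where
  "gdist_set X S v = Min ((\<lambda>s. gdist X s v) ` S)"

definition portal :: "node set \<Rightarrow> axis \<Rightarrow> node \<Rightarrow> node set" where
  "portal X d u = {v. (\<lambda>p q. p \<in> X \<and> q \<in> X \<and> adj_ax d p q)\<^sup>*\<^sup>* u v}"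

definition is_portal :: "node set \<Rightarrow> axis \<Rightarrow> node set \<Rightarrow> bool" where
  "is_portal X d P \<longleftrightarrow> (\<exists>w\<in>X. P = portal X d w)"

definition vis :: "node set \<Rightarrow> node set \<Rightarrow> node set" where
  "vis X P = (\<Union>w\<in>P. portal X AxX w \<union> portal X AxY w \<union> portal X AxZ w)"

text \<open>Side A of the x-portal P lying on the horizontal line b = b0, for the
 chosen half-plane sigma (sigma = 1: above, sigma = -1: below): the union of
 the components of G_{X - P} containing a node adjacent to P in that half-plane.\<close>
definition side_A :: "node set \<Rightarrow> node set \<Rightarrow> int \<Rightarrow> int \<Rightarrow> node set" where
  "side_A X P b0 \<sigma> = {v. \<exists>c\<in>X - P. (adj_in (X - P))\<^sup>*\<^sup>* c v \<and>
      (\<exists>p\<in>P. grid_adj c p) \<and> \<sigma> * (snd c - b0) > 0}"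

definition side_B :: "node set \<Rightarrow> node set \<Rightarrow> int \<Rightarrow> int \<Rightarrow> node set" where
  "side_B X P b0 \<sigma> = X - (P \<union> side_A X P b0 \<sigma>)"

definition proj_y :: "int \<Rightarrow> node \<Rightarrow> node" where
  "proj_y b0 u = (fst u, b0)"

definition proj_z :: "int \<Rightarrow> node \<Rightarrow> node" where
  "proj_z b0 u = (fst u + snd u - b0, b0)"

definition tri :: "int \<Rightarrow> node \<Rightarrow> node set" where
  "tri b0 u = {(a', b'). min b0 (snd u) \<le> b' \<and> b' \<le> max b0 (snd u) \<and>
      min (fst u) (fst u + snd u - b') \<le> a' \<and> a' \<le> max (fst u) (fst u + snd u - b')}"

definition nb_y :: "int \<Rightarrow> node \<Rightarrow> node" where
  "nb_y b0 u = (fst u, snd u + sgn (b0 - snd u))"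

definition nb_z :: "int \<Rightarrow> node \<Rightarrow> node" where
  "nb_z b0 u = (fst u - sgn (b0 - snd u), snd u + sgn (b0 - snd u))"

definition feasible_parent :: "node set \<Rightarrow> node set \<Rightarrow> node \<Rightarrow> node \<Rightarrow> bool" where
  "feasible_parent X S u v \<longleftrightarrow> v \<in> X \<and> grid_adj u v \<and>
      gdist_set X S u = gdist_set X S v + 1"

end

theory Submission
  imports Defs
begin

text \<open>A path from S to u must cross the portal P, since S lies in A \<union> P and A is closed
  under adjacency in X - P. Comparing a shortest such path with the distance in the full grid
  shows that dist(S,c) + h \<le> dist(S,u) for some point c of the base of \<Delta>(u), where h is the
  distance of u from the line of P: walking from the crossing point along the line of P to c stays
  in X, because P and the base of \<Delta>(u) are segments sharing an endpoint. Conversely, paths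
  inside \<Delta>(v) give dist(S,v) \<le> dist(S,c) + h(v) for every node v with \<Delta>(v) \<subseteq> X and every
  point c of its base. The neighbours n_z(u) and n_y(u) have height h - 1, their triangles lie
  in \<Delta>(u), and their bases are the base of \<Delta>(u) without \<pi>_y(u) and \<pi>_z(u) respectively, so the
  hypothesis comparing the two projections yields dist(S,n) \<le> dist(S,u) - 1 for the
  corresponding neighbour n.\<close>

text \<open>Twice the distance in the full grid, which avoids a division by 2.\<close>
definition hex_dist2 :: "node \<Rightarrow> node \<Rightarrow> int" where
  "hex_dist2 p q = \<bar>fst p - fst q\<bar> + \<bar>snd p - snd q\<bar> + \<bar>fst p - fst q + snd p - snd q\<bar>"

lemma hex_dist2_triangle: "hex_dist2 p q \<le> hex_dist2 p m + hex_dist2 m q"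
  unfolding hex_dist2_def by arith

lemma hex_dist2_grid_adj:
  assumes "grid_adj p q"
  shows "hex_dist2 p q = 2"
proof -
  obtain d where "adj_ax d p q"
    using assms by (auto simp: grid_adj_def)
  then show ?thesis
    by (cases d) (auto simp: adj_ax_def nplus_def hex_dist2_def)
qed

lemma hex_dist2_le_path: "(adj_in X ^^ n) p q \<Longrightarrow> hex_dist2 p q \<le> 2 * int n"
proof (induction n arbitrary: q)
  case 0
  then show ?case by (simp add: hex_dist2_def)
next
  case (Suc n)
  then obtain m where "(adj_in X ^^ n) p m" "adj_in X m q"
    by (auto elim: relpowp_Suc_E)
  then show ?case
    using Suc.IH hex_dist2_triangle[of p q m] hex_dist2_grid_adj[of m q]
    by (fastforce simp: adj_in_def)
qed

lemma grid_adj_sym: "grid_adj u v \<Longrightarrow> grid_adj v u"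
  unfolding grid_adj_def adj_ax_def by blast

lemma gdist_le_path: "(adj_in X ^^ n) p q \<Longrightarrow> gdist X p q \<le> n"
  unfolding gdist_def by (rule Least_le)

lemma gdist_path:
  assumes "connected_set X" "p \<in> X" "q \<in> X"
  shows "(adj_in X ^^ gdist X p q) p q"
proof -
  have "\<exists>n. (adj_in X ^^ n) p q"
    using assms by (metis connected_set_def rtranclp_power)
  then show ?thesis
    unfolding gdist_def by (rule LeastI_ex)
qed

locale grid_sources =
  fixes X S :: "node set"
  assumes connected: "connected_set X"
    and finite_sources: "finite S"
    and sources_nonempty: "S \<noteq> {}"
    and sources_subset: "S \<subseteq> X"
begin

lemma gdist_set_le: "s \<in> S \<Longrightarrow> gdist_set X S v \<le> gdist X s v"
  unfolding gdist_set_def using finite_sources by simp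

lemma gdist_set_attained:
  obtains s where "s \<in> S" "gdist_set X S v = gdist X s v"
proof -
  have "gdist_set X S v \<in> (\<lambda>s. gdist X s v) ` S"
    unfolding gdist_set_def using finite_sources sources_nonempty by (intro Min_in) auto
  then show ?thesis
    using that by blast
qed

lemma gdist_set_le_path:
  assumes "v' \<in> X" "(adj_in X ^^ k) v' v"
  shows "gdist_set X S v \<le> gdist_set X S v' + k"
proof -
  obtain s where s: "s \<in> S" "gdist_set X S v' = gdist X s v'"
    by (rule gdist_set_attained)
  have "s \<in> X"
    using s(1) sources_subset by blast
  then have "(adj_in X ^^ (gdist X s v' + k)) s v"
    unfolding relpowp_add using gdist_path[OF connected _ assms(1)] assms(2) by blast
  then have "gdist X s v \<le> gdist X s v' + k"
    by (rule gdist_le_path)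
  with gdist_set_le[OF s(1), of v] s(2) show ?thesis
    by simp
qed

lemma feasible_parentI:
  assumes "u \<in> X" "v \<in> X" "grid_adj u v" "gdist_set X S v + 1 \<le> gdist_set X S u"
  shows "feasible_parent X S u v"
proof -
  have "adj_in X v u"
    using assms(1-3) grid_adj_sym by (simp add: adj_in_def)
  then have "gdist_set X S u \<le> gdist_set X S v + 1"
    using gdist_set_le_path[OF assms(2), of 1 u] by (simp only: relpowp_1)
  with assms show ?thesis
    unfolding feasible_parent_def by simp
qed

end

lemma portal_invariant:
  assumes "v \<in> portal X d u"
  shows "(d = AxX \<longrightarrow> snd v = snd u) \<and> (d = AxY \<longrightarrow> fst v = fst u) \<and>
    (d = AxZ \<longrightarrow> fst v + snd v = fst u + snd u)"
proof -
  have "(\<lambda>p q. p \<in> X \<and> q \<in> X \<and> adj_ax d p q)\<^sup>*\<^sup>* u v"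
    using assms by (simp add: portal_def)
  then show ?thesis
    by (induction rule: rtranclp_induct) (cases d; auto simp: adj_ax_def nplus_def)+
qed

lemma portal_subset: "w \<in> X \<Longrightarrow> portal X d w \<subseteq> X"
  unfolding portal_def by (auto elim: rtranclp.cases)

lemma portal_trans: "v \<in> portal X d u \<Longrightarrow> w \<in> portal X d v \<Longrightarrow> w \<in> portal X d u"
  unfolding portal_def by (auto intro: rtranclp_trans)

definition between :: "int \<Rightarrow> int \<Rightarrow> int \<Rightarrow> bool" where
  "between x y c \<longleftrightarrow> min x y \<le> c \<and> c \<le> max x y"

lemma portal_between:
  assumes "w \<in> X" "p \<in> portal X AxX w" "between (fst w) (fst p) c"
  shows "(c, snd w) \<in> X"
proof -
  have "(\<lambda>p q. p \<in> X \<and> q \<in> X \<and> adj_ax AxX p q)\<^sup>*\<^sup>* w p"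
    using assms(2) by (simp add: portal_def)
  then show ?thesis
    using assms(3)
  proof (induction arbitrary: c rule: rtranclp_induct)
    case base
    then show ?case
      using assms(1) by (cases w) (auto simp: between_def)
  next
    case (step y z)
    have "snd y = snd w"
      using portal_invariant[of y X AxX w] step.hyps(1) by (simp add: portal_def)
    moreover have "snd z = snd y \<and> (fst z = fst y + 1 \<or> fst z = fst y - 1)"
      using step.hyps(2) by (cases y, cases z) (auto simp: adj_ax_def nplus_def)
    ultimately have "between (fst w) (fst y) c \<or> (c, snd w) = z"
      using step.prems by (cases z) (auto simp: between_def)
    then show ?case
      using step.IH step.hyps(2) by blast
  qed
qed

lemma row_path:
  assumes "\<forall>c. between x y c \<longrightarrow> (c, b) \<in> X"
  shows "(adj_in X ^^ nat \<bar>x - y\<bar>) (x, b) (y, b)"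
  using assms
proof (induction "nat \<bar>x - y\<bar>" arbitrary: y)
  case 0
  then show ?case by simp
next
  case (Suc n)
  define y' where "y' = y - sgn (y - x)"
  have n: "n = nat \<bar>x - y'\<bar>" and y': "\<forall>c. between x y' c \<longrightarrow> between x y c"
    using Suc.hyps(2) by (auto simp: y'_def sgn_if between_def)
  have "(adj_in X ^^ n) (x, b) (y', b)"
    using Suc.hyps(1)[OF n] Suc.prems y' n by auto
  moreover have "adj_in X (y', b) (y, b)"
    using Suc.hyps(2) Suc.prems unfolding adj_in_def grid_adj_def adj_ax_def
    by (intro conjI exI[of _ AxX]) (auto simp: y'_def sgn_if between_def nplus_def)
  ultimately show ?case
    using Suc.hyps(2) by (metis relpowp_Suc_I)
qed

text \<open>The base of \<Delta>(u): the x-coordinates of the segment from \<pi>_y(u) to \<pi>_z(u).\<close>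
definition base :: "int \<Rightarrow> node \<Rightarrow> int set" where
  "base b0 u = {c. between (fst u) (fst u + snd u - b0) c}"

lemma base_in_tri: "c \<in> base b0 v \<Longrightarrow> (c, b0) \<in> tri b0 v"
  by (auto simp: tri_def base_def between_def)

lemma apex_in_tri: "v \<in> tri b0 v"
  by (cases v) (auto simp: tri_def)

lemma grid_adj_nb_y: "snd u \<noteq> b0 \<Longrightarrow> grid_adj u (nb_y b0 u)"
  unfolding grid_adj_def adj_ax_def
  by (intro exI[of _ AxY]) (auto simp: nb_y_def nplus_def sgn_if)

lemma grid_adj_nb_z: "snd u \<noteq> b0 \<Longrightarrow> grid_adj u (nb_z b0 u)"
  unfolding grid_adj_def adj_ax_def
  by (intro exI[of _ AxZ]) (auto simp: nb_z_def nplus_def sgn_if)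

lemma height_nb_y: "snd u \<noteq> b0 \<Longrightarrow> Suc (nat \<bar>snd (nb_y b0 u) - b0\<bar>) = nat \<bar>snd u - b0\<bar>"
  by (auto simp: nb_y_def sgn_if)

lemma height_nb_z: "snd u \<noteq> b0 \<Longrightarrow> Suc (nat \<bar>snd (nb_z b0 u) - b0\<bar>) = nat \<bar>snd u - b0\<bar>"
  by (auto simp: nb_z_def sgn_if)

lemma tri_nb_y_subset: "snd u \<noteq> b0 \<Longrightarrow> tri b0 (nb_y b0 u) \<subseteq> tri b0 u"
  by (auto simp: tri_def nb_y_def sgn_if)

lemma tri_nb_z_subset: "snd u \<noteq> b0 \<Longrightarrow> tri b0 (nb_z b0 u) \<subseteq> tri b0 u"
  by (auto simp: tri_def nb_z_def sgn_if)

lemma base_nb_y: "snd u \<noteq> b0 \<Longrightarrow> base b0 (nb_y b0 u) = base b0 u - {fst u + snd u - b0}"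
  by (auto simp: base_def between_def nb_y_def sgn_if)

lemma base_nb_z: "snd u \<noteq> b0 \<Longrightarrow> base b0 (nb_z b0 u) = base b0 u - {fst u}"
  by (auto simp: base_def between_def nb_z_def sgn_if)

lemma tri_path:
  assumes "tri b0 v \<subseteq> X" "c \<in> base b0 v"
  shows "(adj_in X ^^ nat \<bar>snd v - b0\<bar>) (c, b0) v"
  using assms
proof (induction "nat \<bar>snd v - b0\<bar>" arbitrary: v)
  case 0
  then show ?case
    by (cases v) (auto simp: base_def between_def)
next
  case (Suc n)
  then have off: "snd v \<noteq> b0"
    by auto
  define v' where "v' = (if c = fst v then nb_y b0 v else nb_z b0 v)"
  have "c \<in> base b0 v'"
    using Suc.prems(2) off by (auto simp: v'_def base_nb_y base_nb_z)
  moreover have "tri b0 v' \<subseteq> tri b0 v"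
    using tri_nb_y_subset[OF off] tri_nb_z_subset[OF off] by (simp add: v'_def)
  moreover have "n = nat \<bar>snd v' - b0\<bar>"
    using Suc.hyps(2) height_nb_y[OF off] height_nb_z[OF off] by (simp add: v'_def)
  ultimately have "(adj_in X ^^ n) (c, b0) v'"
    using Suc.hyps(1) Suc.prems(1) by blast
  moreover have "adj_in X v' v"
  proof -
    have "v' \<in> X" "v \<in> X"
      using apex_in_tri \<open>tri b0 v' \<subseteq> tri b0 v\<close> Suc.prems(1) by blast+
    moreover have "grid_adj v' v"
      using grid_adj_nb_y[OF off] grid_adj_nb_z[OF off] grid_adj_sym by (simp add: v'_def)
    ultimately show ?thesis
      by (simp add: adj_in_def)
  qed
  ultimately show ?case
    using Suc.hyps(2) by (metis relpowp_Suc_I)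
qed

lemma side_A_subset: "side_A X P b0 \<sigma> \<subseteq> X - P"
proof -
  have "(adj_in Y)\<^sup>*\<^sup>* c v \<Longrightarrow> c \<in> Y \<Longrightarrow> v \<in> Y" for Y c v
    by (induction rule: rtranclp_induct) (auto simp: adj_in_def)
  then show ?thesis
    unfolding side_A_def by blast
qed

lemma side_A_closed:
  assumes "m \<in> side_A X P b0 \<sigma>" "v \<in> X - P" "grid_adj m v"
  shows "v \<in> side_A X P b0 \<sigma>"
proof -
  have "m \<in> X - P"
    using assms(1) side_A_subset by blast
  with assms(2,3) have "adj_in (X - P) m v"
    by (simp add: adj_in_def)
  then show ?thesis
    using assms(1) unfolding side_A_def by (blast intro: rtranclp.rtrancl_into_rtrancl)
qed

lemma path_meets_portal:
  assumes "(adj_in X ^^ n) s v" "s \<in> side_A X P b0 \<sigma> \<union> P" "v \<notin> side_A X P b0 \<sigma> \<union> P"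
  shows "\<exists>p\<in>P. \<exists>k\<le>n. (adj_in X ^^ k) s p \<and> (adj_in X ^^ (n - k)) p v"
  using assms(1,3)
proof (induction n arbitrary: v)
  case 0
  then show ?case
    using assms(2) by auto
next
  case (Suc n)
  obtain m where m: "(adj_in X ^^ n) s m" "adj_in X m v"
    using Suc.prems(1) by (auto elim: relpowp_Suc_E)
  show ?case
  proof (cases "m \<in> P")
    case True
    then show ?thesis
      using m by (intro bexI[of _ m] exI[of _ n]) auto
  next
    case False
    moreover have "m \<notin> side_A X P b0 \<sigma>"
      using side_A_closed[of m X P b0 \<sigma> v] m(2) Suc.prems(2) by (auto simp: adj_in_def)
    ultimately obtain p k where p: "p \<in> P" "k \<le> n" "(adj_in X ^^ k) s p" "(adj_in X ^^ (n - k)) p m"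
      using Suc.IH[OF m(1)] by blast
    then have "(adj_in X ^^ Suc (n - k)) p v"
      using m(2) by (metis relpowp_Suc_I)
    with p show ?thesis
      by (intro bexI[of _ p] exI[of _ k]) (auto simp: Suc_diff_le)
  qed
qed

definition clamp :: "int \<Rightarrow> int \<Rightarrow> int \<Rightarrow> int" where
  "clamp x y t = max (min x y) (min (max x y) t)"

lemma between_clamp: "between x y (clamp x y t)"
  unfolding between_def clamp_def by linarith

lemma between_clamp_cases:
  "between t (clamp x y t) c \<Longrightarrow> \<not> between x y c \<Longrightarrow> e \<in> {x, y} \<Longrightarrow> between t e c"
  unfolding between_def clamp_def by auto

lemma hex_dist2_clamp:
  "snd p = b0 \<Longrightarrow>
    hex_dist2 p u = 2 * \<bar>snd u - b0\<bar> + 2 * \<bar>fst p - clamp (fst u) (fst u + snd u - b0) (fst p)\<bar>"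
  unfolding hex_dist2_def clamp_def by (auto simp: abs_if min_def max_def)

lemma row_path_to_segment:
  assumes "w \<in> X" "p \<in> portal X AxX w" "(e, snd w) \<in> portal X AxX w" "e \<in> {x, y}"
    and "\<forall>c. between x y c \<longrightarrow> (c, snd w) \<in> X"
  shows "(adj_in X ^^ nat \<bar>fst p - clamp x y (fst p)\<bar>) p (clamp x y (fst p), snd w)"
proof -
  have "(c, snd w) \<in> X" if c: "between (fst p) (clamp x y (fst p)) c" for c
  proof (cases "between x y c")
    case True
    with assms(5) show ?thesis
      by blast
  next
    case False
    from c False assms(4) have "between (fst p) e c"
      by (rule between_clamp_cases)
    then have "between (fst w) (fst p) c \<or> between (fst w) e c"
      by (auto simp: between_def)
    then show ?thesis
      using portal_between[OF assms(1)] assms(2,3) by fastforce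
  qed
  moreover have "snd p = snd w"
    using portal_invariant[OF assms(2)] by simp
  ultimately show ?thesis
    using row_path[of "fst p" "clamp x y (fst p)" "snd w" X] by (cases p) auto
qed

lemma visible_off_portal:
  assumes "w \<in> X" "P = portal X AxX w" "u \<in> vis X P" "u \<notin> P"
  obtains e where "e \<in> {fst u, fst u + snd u - snd w}" "(e, snd w) \<in> P" "snd u \<noteq> snd w"
proof -
  obtain p d where p: "p \<in> P" "u \<in> portal X d p"
    using assms(3) by (auto simp: vis_def)
  have "snd p = snd w"
    using p(1) assms(2) portal_invariant by blast
  show ?thesis
  proof (cases d)
    case AxX
    then have "u \<in> P"
      using p assms(2) portal_trans by blast
    with assms(4) show ?thesis
      by blast
  next
    case AxY
    then have "p = (fst u, snd w)"
      using portal_invariant[OF p(2)] \<open>snd p = snd w\<close> by (cases p) auto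
    moreover from calculation have "snd u \<noteq> snd w"
      using p(1) assms(4) by (cases u) auto
    ultimately show ?thesis
      using that p(1) by auto
  next
    case AxZ
    then have "p = (fst u + snd u - snd w, snd w)"
      using portal_invariant[OF p(2)] \<open>snd p = snd w\<close> by (cases p) auto
    moreover from calculation have "snd u \<noteq> snd w"
      using p(1) assms(4) by (cases u) auto
    ultimately show ?thesis
      using that p(1) by auto
  qed
qed

context grid_sources
begin

lemma gdist_set_base_lower_bound:
  assumes "w \<in> X" and P: "P = portal X AxX w" and "S \<subseteq> side_A X P (snd w) \<sigma> \<union> P"
    and "u \<in> X" "u \<notin> side_A X P (snd w) \<sigma> \<union> P" "tri (snd w) u \<subseteq> X"
    and "e \<in> {fst u, fst u + snd u - snd w}" "(e, snd w) \<in> P"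
  obtains c where "c \<in> base (snd w) u"
    "gdist_set X S (c, snd w) + nat \<bar>snd u - snd w\<bar> \<le> gdist_set X S u"
proof -
  obtain s where s: "s \<in> S" "gdist_set X S u = gdist X s u"
    by (rule gdist_set_attained)
  define n where "n = gdist X s u"
  have "(adj_in X ^^ n) s u"
    unfolding n_def using gdist_path[OF connected _ assms(4)] s(1) sources_subset by blast
  then obtain p k where p: "p \<in> P" "k \<le> n" "(adj_in X ^^ k) s p" "(adj_in X ^^ (n - k)) p u"
    using path_meets_portal s(1) assms(3,5) by blast
  define c where "c = clamp (fst u) (fst u + snd u - snd w) (fst p)"
  have "\<forall>c. between (fst u) (fst u + snd u - snd w) c \<longrightarrow> (c, snd w) \<in> X"
    using base_in_tri[of _ "snd w" u] assms(6) by (auto simp: base_def)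
  then have "(adj_in X ^^ nat \<bar>fst p - c\<bar>) p (c, snd w)"
    unfolding c_def using row_path_to_segment[OF assms(1)] p(1) assms(7,8) P by blast
  then have "gdist_set X S (c, snd w) \<le> gdist_set X S p + nat \<bar>fst p - c\<bar>"
    using gdist_set_le_path p(1) portal_subset[OF assms(1)] P by blast
  moreover have "gdist_set X S p \<le> k"
    using gdist_set_le[OF s(1)] gdist_le_path[OF p(3)] by (meson order_trans)
  moreover have "2 * \<bar>snd u - snd w\<bar> + 2 * \<bar>fst p - c\<bar> \<le> 2 * int (n - k)"
    using hex_dist2_le_path[OF p(4)] hex_dist2_clamp[of p "snd w" u] portal_invariant p(1) P
    by (simp add: c_def)
  then have "int (nat \<bar>snd u - snd w\<bar> + nat \<bar>fst p - c\<bar>) \<le> int (n - k)"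
    by simp
  then have "nat \<bar>snd u - snd w\<bar> + nat \<bar>fst p - c\<bar> \<le> n - k"
    by (simp only: of_nat_le_iff)
  ultimately have "gdist_set X S (c, snd w) + nat \<bar>snd u - snd w\<bar> \<le> gdist_set X S u"
    using p(2) s(2) n_def by linarith
  moreover have "c \<in> base (snd w) u"
    by (simp add: c_def base_def between_clamp)
  ultimately show ?thesis
    using that by blast
qed

lemma gdist_set_tri_upper_bound:
  assumes "tri b0 v \<subseteq> X" "c \<in> base b0 v"
  shows "gdist_set X S v \<le> gdist_set X S (c, b0) + nat \<bar>snd v - b0\<bar>"
  using gdist_set_le_path tri_path[OF assms] base_in_tri[OF assms(2)] assms(1) by blast

lemma feasible_parent_via_base:
  assumes "u \<in> X" "grid_adj u v" "tri b0 v \<subseteq> X"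
    and "Suc (nat \<bar>snd v - b0\<bar>) = nat \<bar>snd u - b0\<bar>" "c \<in> base b0 v"
    and "gdist_set X S (c, b0) + nat \<bar>snd u - b0\<bar> \<le> gdist_set X S u"
  shows "feasible_parent X S u v"
proof (rule feasible_parentI[OF assms(1) _ assms(2)])
  show "v \<in> X"
    using assms(3) apex_in_tri by blast
  show "gdist_set X S v + 1 \<le> gdist_set X S u"
    using gdist_set_tri_upper_bound[OF assms(3,5)] assms(4,6) by linarith
qed

lemma feasible_parent_nb_z:
  assumes "u \<in> X" "snd u \<noteq> b0" "tri b0 u \<subseteq> X" "c \<in> base b0 u"
    and "gdist_set X S (c, b0) + nat \<bar>snd u - b0\<bar> \<le> gdist_set X S u"
    and "gdist_set X S (proj_z b0 u) \<le> gdist_set X S (proj_y b0 u)"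
  shows "feasible_parent X S u (nb_z b0 u)"
proof -
  define c' where "c' = (if c = fst u then fst u + snd u - b0 else c)"
  have "c' \<in> base b0 (nb_z b0 u)"
    unfolding base_nb_z[OF assms(2)] using assms(2,4) by (auto simp: c'_def base_def between_def)
  moreover have "gdist_set X S (c', b0) \<le> gdist_set X S (c, b0)"
    using assms(6) by (simp add: c'_def proj_y_def proj_z_def)
  ultimately show ?thesis
    using feasible_parent_via_base[OF assms(1) grid_adj_nb_z[OF assms(2)]]
      tri_nb_z_subset[OF assms(2)] height_nb_z[OF assms(2)] assms(3,5)
    by fastforce
qed

lemma feasible_parent_nb_y:
  assumes "u \<in> X" "snd u \<noteq> b0" "tri b0 u \<subseteq> X" "c \<in> base b0 u"
    and "gdist_set X S (c, b0) + nat \<bar>snd u - b0\<bar> \<le> gdist_set X S u"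
    and "gdist_set X S (proj_y b0 u) \<le> gdist_set X S (proj_z b0 u)"
  shows "feasible_parent X S u (nb_y b0 u)"
proof -
  define c' where "c' = (if c = fst u + snd u - b0 then fst u else c)"
  have "c' \<in> base b0 (nb_y b0 u)"
    unfolding base_nb_y[OF assms(2)] using assms(2,4) by (auto simp: c'_def base_def between_def)
  moreover have "gdist_set X S (c', b0) \<le> gdist_set X S (c, b0)"
    using assms(6) by (simp add: c'_def proj_y_def proj_z_def)
  ultimately show ?thesis
    using feasible_parent_via_base[OF assms(1) grid_adj_nb_y[OF assms(2)]]
      tri_nb_y_subset[OF assms(2)] height_nb_y[OF assms(2)] assms(3,5)
    by fastforce
qed

end

theorem mainTheorem19:
  fixes X P S :: "node set" and w u :: node and \<sigma> :: int
  assumes "finite X"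
    and "connected_set X"
    and "no_holes X"
    and "w \<in> X" and "P = portal X AxX w"
    and "\<sigma> \<in> {1, -1}"
    and "S \<subseteq> side_A X P (snd w) \<sigma> \<union> P" and "S \<noteq> {}"
    and "u \<in> side_B X P (snd w) \<sigma> \<inter> vis X P"
    and "tri (snd w) u \<subseteq> X"
  shows "(gdist_set X S (proj_z (snd w) u) \<le> gdist_set X S (proj_y (snd w) u)
            \<longrightarrow> feasible_parent X S u (nb_z (snd w) u))
       \<and> (gdist_set X S (proj_z (snd w) u) \<ge> gdist_set X S (proj_y (snd w) u)
            \<longrightarrow> feasible_parent X S u (nb_y (snd w) u))"
proof -
  have "S \<subseteq> X"
    using assms(4,5,7) side_A_subset portal_subset by blast
  then interpret grid_sources X S
    using assms(1,2,8) finite_subset by unfold_locales auto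
  have u: "u \<in> X" "u \<notin> side_A X P (snd w) \<sigma> \<union> P" "u \<in> vis X P"
    using assms(9) by (auto simp: side_B_def)
  obtain e where "e \<in> {fst u, fst u + snd u - snd w}" "(e, snd w) \<in> P"
    and off: "snd u \<noteq> snd w"
    using visible_off_portal[OF assms(4,5) u(3)] u(2) by blast
  then obtain c where "c \<in> base (snd w) u"
    "gdist_set X S (c, snd w) + nat \<bar>snd u - snd w\<bar> \<le> gdist_set X S u"
    using gdist_set_base_lower_bound[OF assms(4,5,7) u(1,2) assms(10)] by blast
  then show ?thesis
    using feasible_parent_nb_z[OF u(1) off assms(10)] feasible_parent_nb_y[OF u(1) off assms(10)]
    by blast
qed

end
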